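(* Let $\alpha=a/q+\beta$ with $a\in\mathbb{Z}$, $q\in\mathbb{N}$, $(a,q)=1$ and $|\beta|<1/q^2$. For $X\ge 2$, \[ \sum_{n\le X}\mu^2(n)\operatorname{e}(\alpha n^2)\ll \frac{X}{q^{1/4}}+X^{1/2}\log X(\log q)^{1/2}+X^{1/2}q^{1/4}(\log q)^{1/4}. \]
   Context: $\operatorname{e}(x)=\exp(2\pi i x)$; $\mu$ is the Möbius function. $\ll$ denotes an inequality up to an absolute constant. *)

theory Defs
  imports "HOL-Analysis.Analysis" "HOL-Computational_Algebra.Squarefree"
begin

definition e :: "real \<Rightarrow> complex" where
  "e x = exp (2 * of_real pi * \<i> * of_real x)"

text \<open>Moebius function on positive integers (value 0 at 0 by convention, never used).\<close>
definition moebius_mu :: "nat \<Rightarrow> int" where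
  "moebius_mu n = (if n = 0 then 0 else if squarefree n then (-1) ^ card (prime_factors n) else 0)"

end

(*
  Since mu(n)^2 is the sum of mu(d) over d with d^2 dividing n, the sum equals the sum over d of
  mu(d) T_d, where T_d is the quadratic Weyl sum of e(alpha d^4 m^2) over m <= X / d^2.

  For d <= D, Weyl differencing bounds |T_d|^2 by sums of min(N, 1 / ||theta h||) with
  theta = 2 alpha d^4. A Dirichlet approximation b / r of theta spreads the points theta h evenly
  modulo 1 along each block of r consecutive h, and the approximation a / q of alpha forces
  q <= 4 d^4 r. This gives |T_d|^2 << X^2 / q + (X / d^2 + q) log q. For d > D the trivial bound
  X / d^2 suffices. Altogether the sum is << X / D + D (X / sqrt q + sqrt (q log q))
  + sqrt (X log q) log X; the theorem follows by taking D near the balancing point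
  sqrt (X / (X / sqrt q + sqrt (q log q))), or from the trivial bound X when that is below 1.
*)

theory Submission
  imports Defs
begin

section \<open>Distance to the nearest integer and the additive character\<close>

definition dist_int :: "real \<Rightarrow> real" where
  "dist_int x = \<bar>x - of_int (round x)\<bar>"

lemma dist_int_le: "dist_int x \<le> \<bar>x - of_int m\<bar>"
  unfolding dist_int_def by (rule round_diff_minimal)

lemma dist_int_le_half: "dist_int x \<le> 1/2"
  unfolding dist_int_def using of_int_round_ge[of x] of_int_round_le[of x] by linarith

lemma dist_int_add_of_int [simp]: "dist_int (x + of_int z) = dist_int x"
proof (rule antisym)
  show "dist_int (x + of_int z) \<le> dist_int x"
    using dist_int_le[of "x + of_int z" "round x + z"] by (simp add: dist_int_def)
  show "dist_int x \<le> dist_int (x + of_int z)"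
    using dist_int_le[of x "round (x + of_int z) - z"] by (simp add: dist_int_def algebra_simps)
qed

lemma dist_int_add_ge: "dist_int x - \<bar>y\<bar> \<le> dist_int (x + y)"
  using dist_int_le[of x "round (x + y)"] unfolding dist_int_def by linarith

lemma dist_int_ge_min:
  assumes "0 \<le> x" "x < 1"
  shows "min x (1 - x) \<le> dist_int x"
proof -
  have "round x = 0 \<or> round x = 1"
    using of_int_round_ge[of x] of_int_round_le[of x] assms by fastforce
  then show ?thesis unfolding dist_int_def by auto
qed

lemma e_eq_cis: "e x = cis (2 * pi * x)"
  unfolding e_def by (simp add: cis_conv_exp algebra_simps)

lemma e_of_int [simp]: "e (of_int k) = 1"
  by (simp add: e_eq_cis)

lemma e_0 [simp]: "e 0 = 1"
  using e_of_int[of 0] by simp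

lemma e_add: "e (x + y) = e x * e y"
  by (simp add: e_def algebra_simps exp_add[symmetric])

lemma e_mult_cnj: "e x * cnj (e y) = e (x - y)"
  by (simp add: e_eq_cis cis_cnj cis_mult algebra_simps)

lemma norm_e [simp]: "norm (e x) = 1"
  by (simp add: e_eq_cis)

lemma norm_sum_e_le: "norm (\<Sum>n\<in>A. e (f n)) \<le> real (card A)"
  using norm_sum[of "\<lambda>n. e (f n)" A] by simp

lemma e_mult_of_nat: "e (x * of_nat n) = e x ^ n"
  unfolding e_def by (simp add: exp_of_nat_mult[symmetric] algebra_simps)

lemma norm_cis_minus_1: "norm (cis t - 1) = 2 * \<bar>sin (t / 2)\<bar>"
proof -
  have "(norm (cis t - 1))\<^sup>2 = (cos t - 1)\<^sup>2 + (sin t)\<^sup>2"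
    by (simp add: cmod_def)
  also have "\<dots> = 2 - 2 * cos t"
    using sin_cos_squared_add[of t] by (simp add: power2_eq_square algebra_simps)
  also have "\<dots> = (2 * \<bar>sin (t / 2)\<bar>)\<^sup>2"
    using cos_double_sin[of "t / 2"] by (simp add: power2_eq_square algebra_simps)
  finally show ?thesis
    using power2_eq_iff_nonneg[of "norm (cis t - 1)" "2 * \<bar>sin (t / 2)\<bar>"] by simp
qed

lemma jordan_inequality:
  assumes "0 \<le> y" "y \<le> pi / 2"
  shows "2 / pi * y \<le> sin y"
proof -
  have concave: "concave_on {0..pi} sin"
    by (rule f''_le0_imp_concave[where f' = cos and f'' = "\<lambda>x. - sin x"])
       (auto intro!: derivative_eq_intros sin_ge_zero)
  define t where "t = 2 / pi * y"
  have "0 \<le> t" "t \<le> 1"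
    using assms pi_gt_zero by (auto simp: t_def field_simps)
  then have "(1 - t) * sin 0 + t * sin (pi / 2) \<le> sin ((1 - t) * 0 + t * (pi / 2))"
    using concave_onD[OF concave, of t 0 "pi / 2"] pi_gt_zero by auto
  then show ?thesis by (simp add: t_def)
qed

lemma norm_e_minus_1_ge: "4 * dist_int x \<le> norm (e x - 1)"
proof -
  define y where "y = x - of_int (round x)"
  have "e x = e y"
    using e_add[of y "of_int (round x)"] by (simp add: y_def)
  moreover have dist: "dist_int x = \<bar>y\<bar>" "\<bar>y\<bar> \<le> 1/2"
    using dist_int_le_half[of x] by (simp_all add: dist_int_def y_def)
  moreover have "\<bar>sin (pi * y)\<bar> = sin (pi * \<bar>y\<bar>)"
  proof -
    have "0 \<le> sin (pi * \<bar>y\<bar>)"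
      using dist by (intro sin_ge_zero) auto
    then show ?thesis by (cases "y \<ge> 0") auto
  qed
  moreover have "2 / pi * (pi * \<bar>y\<bar>) \<le> sin (pi * \<bar>y\<bar>)"
    using dist by (intro jordan_inequality) auto
  ultimately show ?thesis
    by (simp add: e_eq_cis norm_cis_minus_1)
qed

lemma norm_sum_e_linear_le:
  assumes "dist_int \<theta> > 0"
  shows "norm (\<Sum>n\<in>{1..K}. e (\<theta> * of_nat n)) \<le> 1 / (2 * dist_int \<theta>)"
proof -
  define z where "z = e \<theta>"
  have dist_z: "4 * dist_int \<theta> \<le> norm (1 - z)"
    using norm_e_minus_1_ge[of \<theta>] by (simp add: z_def norm_minus_commute)
  then have "z \<noteq> 1" using assms by auto
  have "(1 - z) * (\<Sum>n\<in>{1..K}. z ^ n) = z - z ^ Suc K"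
    using sum_gp_multiplied[of 1 K z] by (cases "K = 0") simp_all
  then have "(\<Sum>n\<in>{1..K}. z ^ n) = (z - z ^ Suc K) / (1 - z)"
    using \<open>z \<noteq> 1\<close> by (simp add: field_simps)
  then have "norm (\<Sum>n\<in>{1..K}. z ^ n) = norm (z - z ^ Suc K) / norm (1 - z)"
    by (simp add: norm_divide)
  also have "\<dots> \<le> 2 / norm (1 - z)"
    using norm_triangle_ineq4[of z "z ^ Suc K"]
    by (intro divide_right_mono) (simp_all add: z_def norm_power norm_mult)
  also have "\<dots> \<le> 2 / (4 * dist_int \<theta>)"
    using dist_z assms by (intro divide_left_mono) (auto intro!: mult_pos_pos)
  finally show ?thesis by (simp add: e_mult_of_nat z_def)
qed

section \<open>Weyl differencing\<close>

lemma sum_lower_triangle_reindex: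
  fixes F :: "nat \<Rightarrow> nat \<Rightarrow> 'a::comm_monoid_add"
  shows "(\<Sum>m\<in>{1..N}. \<Sum>n\<in>{1..N}. if n < m then F m n else 0)
       = (\<Sum>h\<in>{1..N}. \<Sum>n\<in>{1..N-h}. F (n + h) n)"
proof -
  have shift: "(\<Sum>m\<in>{1..N}. if n < m then F m n else 0)
             = (\<Sum>h\<in>{1..N}. if n + h \<le> N then F (n + h) n else 0)" for n
  proof -
    have "(\<Sum>m\<in>{1..N}. if n < m then F m n else 0) = (\<Sum>m\<in>{n+1..N}. F m n)"
      by (simp add: sum.inter_filter[symmetric]) (intro sum.cong, auto)
    also have "\<dots> = (\<Sum>h\<in>{1..N-n}. F (n + h) n)"
      by (rule sum.reindex_bij_witness[where i = "\<lambda>h. n + h" and j = "\<lambda>m. m - n"]) auto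
    also have "\<dots> = (\<Sum>h\<in>{1..N}. if n + h \<le> N then F (n + h) n else 0)"
      by (simp add: sum.inter_filter[symmetric]) (intro sum.cong, auto)
    finally show ?thesis .
  qed
  have "(\<Sum>m\<in>{1..N}. \<Sum>n\<in>{1..N}. if n < m then F m n else 0)
      = (\<Sum>h\<in>{1..N}. \<Sum>n\<in>{1..N}. if n + h \<le> N then F (n + h) n else 0)"
    by (subst sum.swap) (simp only: shift, rule sum.swap)
  also have "\<dots> = (\<Sum>h\<in>{1..N}. \<Sum>n\<in>{1..N-h}. F (n + h) n)"
    by (rule sum.cong[OF refl]) (simp add: sum.inter_filter[symmetric], intro sum.cong, auto)
  finally show ?thesis .
qed

lemma double_sum_hermitian:
  fixes F :: "nat \<Rightarrow> nat \<Rightarrow> complex" and A :: "nat set"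
  assumes "\<And>m n. F n m = cnj (F m n)"
  shows "(\<Sum>m\<in>A. \<Sum>n\<in>A. F m n) = (\<Sum>m\<in>A. F m m)
          + (\<Sum>m\<in>A. \<Sum>n\<in>A. if n < m then F m n else 0)
          + cnj (\<Sum>m\<in>A. \<Sum>n\<in>A. if n < m then F m n else 0)"
proof -
  have F_cnj: "cnj (F m n) = F n m" for m n
    by (rule assms[symmetric])
  have "cnj (\<Sum>m\<in>A. \<Sum>n\<in>A. if n < m then F m n else 0)
      = (\<Sum>m\<in>A. \<Sum>n\<in>A. if n < m then F n m else 0)"
    by (simp add: cnj_sum F_cnj if_distrib cong: if_cong)
  also have "\<dots> = (\<Sum>m\<in>A. \<Sum>n\<in>A. if m < n then F m n else 0)"
    by (rule sum.swap)
  moreover have "(\<Sum>m\<in>A. F m m) = (\<Sum>m\<in>A. \<Sum>n\<in>A. if m = n then F m n else 0)"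
    by (cases "finite A") (simp_all add: sum.delta)
  ultimately show ?thesis
    by (simp add: sum.distrib[symmetric]) (intro sum.cong refl, auto)
qed

lemma weyl_differencing:
  fixes \<gamma> :: real
  shows "(norm (\<Sum>m\<in>{1..N}. e (\<gamma> * (of_nat m)\<^sup>2)))\<^sup>2
       \<le> real N + 2 * (\<Sum>h\<in>{1..N}. norm (\<Sum>n\<in>{1..N-h}. e (2 * \<gamma> * of_nat h * of_nat n)))"
proof -
  define W where "W = (\<Sum>m\<in>{1..N}. e (\<gamma> * (of_nat m)\<^sup>2))"
  define F where "F m n = e (\<gamma> * (of_nat m)\<^sup>2 - \<gamma> * (of_nat n)\<^sup>2)" for m n :: nat
  define U where "U = (\<Sum>m\<in>{1..N}. \<Sum>n\<in>{1..N}. if n < m then F m n else 0)"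
  have F_cnj: "F n m = cnj (F m n)" for m n
    unfolding F_def using e_mult_cnj[of 0] by (simp flip: e_mult_cnj)
  have F_shift: "F (n + h) n = e (\<gamma> * (of_nat h)\<^sup>2) * e (2 * \<gamma> * of_nat h * of_nat n)" for n h
    unfolding F_def e_add[symmetric] by (simp add: power2_eq_square algebra_simps)
  have "(norm W)\<^sup>2 = norm (complex_of_real ((norm W)\<^sup>2))"
    by (simp only: norm_of_real abs_of_nonneg zero_le_power2)
  also have "complex_of_real ((norm W)\<^sup>2) = W * cnj W"
    by (rule complex_norm_square)
  also have "\<dots> = (\<Sum>m\<in>{1..N}. \<Sum>n\<in>{1..N}. F m n)"
    unfolding W_def F_def cnj_sum sum_product e_mult_cnj ..
  also have "\<dots> = of_nat N + U + cnj U"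
    unfolding U_def by (subst double_sum_hermitian[OF F_cnj]) (simp add: F_def)
  also have "norm (of_nat N + U + cnj U) \<le> real N + 2 * norm U"
    using norm_triangle_ineq[of "of_nat N + U" "cnj U"] norm_triangle_ineq[of "of_nat N" U] by simp
  finally have "(norm W)\<^sup>2 \<le> real N + 2 * norm U" .
  moreover have "norm U \<le> (\<Sum>h\<in>{1..N}. norm (\<Sum>n\<in>{1..N-h}. e (2 * \<gamma> * of_nat h * of_nat n)))"
    unfolding U_def sum_lower_triangle_reindex F_shift sum_distrib_left[symmetric]
    by (rule order_trans[OF norm_sum]) (simp add: norm_mult)
  ultimately show ?thesis
    unfolding W_def by simp
qed

section \<open>Sums of reciprocal distances to the integers\<close>

lemma harm_le_1_plus_ln: "harm n \<le> 1 + ln (real n)"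
proof (induction n)
  case (Suc n)
  show ?case
  proof (cases "n = 0")
    case False
    have "ln (real n / real (Suc n)) \<le> real n / real (Suc n) - 1"
      using False by (intro ln_le_minus_one) auto
    then have "1 / real (Suc n) \<le> ln (real (Suc n)) - ln (real n)"
      using False by (simp add: ln_div field_simps)
    then show ?thesis
      using Suc.IH by (simp add: harm_Suc inverse_eq_divide)
  qed (simp add: harm_def)
qed (simp add: harm_def)

text \<open>Write \<open>r \<theta> k = s + t\<close> with \<open>s\<close> an integer and \<open>0 \<le> t < 1\<close>. Modulo 1, \<open>\<theta> (k + j)\<close> equals
  \<open>(l + t) / r + (\<theta> - b / r) j\<close>, and the second term is at most \<open>1 / r\<close>.\<close>

lemma dist_int_near_rational_ge:
  fixes \<theta> :: real and b :: int and r j k :: nat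
  assumes r: "r \<ge> 1" and approx: "\<bar>\<theta> - of_int b / of_nat r\<bar> \<le> 1 / (of_nat r)\<^sup>2" and j: "j \<le> r"
  defines "l \<equiv> nat ((\<lfloor>of_nat r * (\<theta> * of_nat k)\<rfloor> + b * int j) mod int r)"
  shows "(real (min l (r - 1 - l)) - 1) / real r \<le> dist_int (\<theta> * of_nat (k + j))"
proof -
  define s where "s = \<lfloor>of_nat r * (\<theta> * of_nat k)\<rfloor>"
  define t where "t = of_nat r * (\<theta> * of_nat k) - of_int s"
  define z where "z = (s + b * int j) div int r"
  define \<delta> where "\<delta> = \<theta> - of_int b / of_nat r"
  define u where "u = (of_nat l + t) / real r"
  have t: "0 \<le> t" "t < 1"
    unfolding t_def s_def by linarith+
  have l: "l < r" "int l = (s + b * int j) mod int r"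
    using r by (simp_all add: l_def s_def nat_less_iff)
  have u: "0 \<le> u" "u < 1"
    using t l r by (auto simp: u_def field_simps)
  have "s + b * int j = int r * z + int l"
    using l(2) by (simp add: z_def)
  then have sz: "of_int s + of_int b * of_nat j = real r * of_int z + real l"
    by (metis of_int_add of_int_mult of_int_of_nat_eq)
  have "\<theta> * of_nat (k + j) = (of_int s + of_int b * of_nat j + t) / real r + \<delta> * of_nat j"
    using r by (simp add: t_def \<delta>_def field_simps)
  also have "\<dots> = (u + \<delta> * of_nat j) + of_int z"
    unfolding sz using r by (simp add: u_def field_simps)
  finally have dist_eq: "dist_int (\<theta> * of_nat (k + j)) = dist_int (u + \<delta> * of_nat j)"
    by simp
  have \<delta>: "\<bar>\<delta> * of_nat j\<bar> \<le> 1 / real r"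
  proof -
    have "\<bar>\<delta> * of_nat j\<bar> \<le> 1 / (of_nat r)\<^sup>2 * of_nat r"
      using approx j unfolding \<delta>_def abs_mult by (intro mult_mono) auto
    then show ?thesis using r by (simp add: power2_eq_square)
  qed
  have "real l / real r \<le> u" "real (r - 1 - l) / real r \<le> 1 - u"
    using t l r by (simp_all add: u_def divide_right_mono of_nat_diff diff_divide_distrib)
  moreover have "real (min l (r - 1 - l)) / real r \<le> real l / real r"
    "real (min l (r - 1 - l)) / real r \<le> real (r - 1 - l) / real r"
    by (intro divide_right_mono; simp)+
  ultimately have "real (min l (r - 1 - l)) / real r \<le> min u (1 - u)"
    by linarith
  then show ?thesis
    using dist_eq \<delta> dist_int_add_ge[of u "\<delta> * of_nat j"] dist_int_ge_min[OF u]
    unfolding diff_divide_distrib by linarith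
qed

lemma bij_betw_affine_mod:
  fixes b s :: int and r :: nat
  assumes r: "r \<ge> 1" and cop: "coprime b (int r)"
  shows "bij_betw (\<lambda>j. nat ((s + b * int j) mod int r)) {1..r} {..<r}"
proof -
  let ?L = "\<lambda>j. nat ((s + b * int j) mod int r)"
  have "inj_on ?L {1..r}"
  proof
    fix j1 j2 assume j: "j1 \<in> {1..r}" "j2 \<in> {1..r}" and "?L j1 = ?L j2"
    then have "(s + b * int j1) mod int r = (s + b * int j2) mod int r"
      using r by (simp add: eq_nat_nat_iff)
    then have "int r dvd b * (int j1 - int j2)"
      by (simp add: mod_eq_dvd_iff algebra_simps)
    then have "int r dvd int j1 - int j2"
      using cop by (metis coprime_commute coprime_dvd_mult_right_iff)
    moreover have "\<bar>int j1 - int j2\<bar> < int r"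
      using j by auto
    ultimately show "j1 = j2"
      using dvd_imp_le_int[of "int j1 - int j2" "int r"] by fastforce
  qed
  moreover have "?L ` {1..r} \<subseteq> {..<r}"
    using r by (auto simp: nat_less_iff)
  ultimately show ?thesis
    by (simp add: bij_betw_def card_subset_eq card_image)
qed

lemma sum_reciprocal_profile_le:
  fixes B :: real and r :: nat
  assumes "B \<ge> 0"
  shows "(\<Sum>l<r. if l < 2 then B else real r / (2 * (real l - 1))) \<le> 2 * B + real r / 2 * harm r"
proof -
  have "(\<Sum>l<r. if l < 2 then B else real r / (2 * (real l - 1)))
      \<le> (\<Sum>l<r + 2. if l < 2 then B else real r / (2 * (real l - 1)))"
    using assms by (intro sum_mono2) auto
  also have "\<dots> = (\<Sum>l<2. if l < 2 then B else real r / (2 * (real l - 1)))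
      + (\<Sum>l=2..<r + 2. if l < 2 then B else real r / (2 * (real l - 1)))"
    unfolding lessThan_atLeast0 by (rule sum.atLeastLessThan_concat[symmetric]) auto
  also have "(\<Sum>l=2..<r + 2. if l < 2 then B else real r / (2 * (real l - 1)))
      = (\<Sum>i=1..r. real r / 2 * inverse (real i))"
    by (rule sum.reindex_bij_witness[where i = "\<lambda>i. i + 1" and j = "\<lambda>l. l - 1"])
       (auto simp: field_simps of_nat_diff)
  also have "(\<Sum>l<2. if l < 2 then B else real r / (2 * (real l - 1)))
      + (\<Sum>i=1..r. real r / 2 * inverse (real i)) = 2 * B + real r / 2 * harm r"
    by (simp add: harm_def sum_distrib_left)
  finally show ?thesis .
qed

lemma sum_block_le:
  fixes \<theta> B :: real and b :: int and r k :: nat and f :: "nat \<Rightarrow> real"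
  assumes r: "r \<ge> 1" and cop: "coprime b (int r)"
    and approx: "\<bar>\<theta> - of_int b / of_nat r\<bar> \<le> 1 / (of_nat r)\<^sup>2"
    and f_nonneg: "\<And>h. 0 \<le> f h" and f_le: "\<And>h. f h \<le> B"
    and f_le_dist: "\<And>h. dist_int (\<theta> * of_nat h) > 0 \<Longrightarrow> f h \<le> 1 / (2 * dist_int (\<theta> * of_nat h))"
  shows "(\<Sum>j\<in>{1..r}. f (k + j)) \<le> 4 * B + real r * (1 + ln (real r))"
proof -
  define g where "g l = (if l < 2 then B else real r / (2 * (real l - 1)))" for l :: nat
  define L where "L j = nat ((\<lfloor>of_nat r * (\<theta> * of_nat k)\<rfloor> + b * int j) mod int r)" for j :: nat
  have B: "B \<ge> 0"
    using f_nonneg[of 0] f_le[of 0] by linarith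
  have g_nonneg: "g l \<ge> 0" for l
    using B by (simp add: g_def)
  have f_le_g: "f (k + j) \<le> g (min (L j) (r - 1 - L j))" if j: "j \<in> {1..r}" for j
  proof (cases "min (L j) (r - 1 - L j) < 2")
    case True
    then show ?thesis using f_le by (simp add: g_def)
  next
    case False
    define m where "m = min (L j) (r - 1 - L j)"
    have "m \<ge> 2"
      using False unfolding m_def by linarith
    then have pos: "0 < (real m - 1) / real r"
      using r by simp
    have dist: "(real m - 1) / real r \<le> dist_int (\<theta> * of_nat (k + j))"
      unfolding m_def L_def using dist_int_near_rational_ge[OF r approx] j by simp
    then have "f (k + j) \<le> 1 / (2 * dist_int (\<theta> * of_nat (k + j)))"
      using pos by (intro f_le_dist) linarith
    also have "\<dots> \<le> 1 / (2 * ((real m - 1) / real r))"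
      using dist pos by (intro divide_left_mono mult_left_mono mult_pos_pos) auto
    also have "\<dots> = g m"
      using \<open>m \<ge> 2\<close> by (simp add: g_def)
    finally show ?thesis
      by (simp add: m_def)
  qed
  have g_min: "g (min l l') \<le> g l + g l'" for l l'
    using g_nonneg[of l] g_nonneg[of l'] by (simp add: min_def)
  have "(\<Sum>j\<in>{1..r}. f (k + j)) \<le> (\<Sum>j\<in>{1..r}. g (L j) + g (r - 1 - L j))"
    using f_le_g g_min by (intro sum_mono) (meson order_trans)
  also have "\<dots> = (\<Sum>l<r. g l + g (r - 1 - l))"
    using sum.reindex_bij_betw[OF bij_betw_affine_mod[OF r cop]] unfolding L_def by simp
  also have "\<dots> = 2 * (\<Sum>l<r. g l)"
    using sum.nat_diff_reindex[of g r] by (simp add: sum.distrib)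
  also have "\<dots> \<le> 4 * B + real r * harm r"
    using sum_reciprocal_profile_le[OF B, of r] unfolding g_def by simp
  also have "\<dots> \<le> 4 * B + real r * (1 + ln (real r))"
    using harm_le_1_plus_ln[of r] by (simp add: mult_left_mono)
  finally show ?thesis .
qed

lemma sum_blocks_le:
  fixes \<theta> B :: real and b :: int and r :: nat and f :: "nat \<Rightarrow> real"
  assumes r: "r \<ge> 1" and cop: "coprime b (int r)"
    and approx: "\<bar>\<theta> - of_int b / of_nat r\<bar> \<le> 1 / (of_nat r)\<^sup>2"
    and f_nonneg: "\<And>h. 0 \<le> f h" and f_le: "\<And>h. f h \<le> B"
    and f_le_dist: "\<And>h. dist_int (\<theta> * of_nat h) > 0 \<Longrightarrow> f h \<le> 1 / (2 * dist_int (\<theta> * of_nat h))"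
  shows "(\<Sum>h\<in>{1..N}. f h) \<le> (real N / real r + 1) * (4 * B + real r * (1 + ln (real r)))"
proof -
  define block where "block = 4 * B + real r * (1 + ln (real r))"
  have block_nonneg: "block \<ge> 0"
    unfolding block_def using f_nonneg[of 0] f_le[of 0] r by simp
  have blocks: "(\<Sum>h\<in>{1..n * r}. f h) \<le> real n * block" for n
  proof (induction n)
    case (Suc n)
    have "{1..Suc n * r} = {1..n * r} \<union> {n * r + 1..n * r + r}"
      by auto
    then have "(\<Sum>h\<in>{1..Suc n * r}. f h) = (\<Sum>h\<in>{1..n * r}. f h) + (\<Sum>h\<in>{n * r + 1..n * r + r}. f h)"
      by (simp add: sum.union_disjoint)
    also have "(\<Sum>h\<in>{n * r + 1..n * r + r}. f h) = (\<Sum>j\<in>{1..r}. f (n * r + j))"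
      by (rule sum.reindex_bij_witness[where i = "\<lambda>j. n * r + j" and j = "\<lambda>h. h - n * r"]) auto
    also have "(\<Sum>j\<in>{1..r}. f (n * r + j)) \<le> block"
      unfolding block_def by (rule sum_block_le[OF r cop approx f_nonneg f_le f_le_dist])
    finally show ?case
      using Suc.IH by (simp add: algebra_simps)
  qed simp
  define n where "n = N div r + 1"
  have "N mod r < r"
    using r by simp
  then have "N \<le> n * r"
    using div_mult_mod_eq[of N r] unfolding n_def distrib_right mult_1 by linarith
  then have "(\<Sum>h\<in>{1..N}. f h) \<le> (\<Sum>h\<in>{1..n * r}. f h)"
    using f_nonneg by (intro sum_mono2) auto
  also have "\<dots> \<le> real n * block"
    by (rule blocks)
  also have "\<dots> \<le> (real N / real r + 1) * block"
  proof -
    have "real (N div r) \<le> real N / real r"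
      by (rule of_nat_div_le_of_nat)
    then show ?thesis
      using block_nonneg by (intro mult_right_mono) (simp_all add: n_def)
  qed
  finally show ?thesis
    unfolding block_def .
qed

section \<open>Quadratic Weyl sums at a rational approximation\<close>

lemma denominator_lower_bound:
  fixes a b k :: int and q c :: nat and \<beta> :: real
  assumes q: "q \<ge> 1" and cop: "coprime a (int q)" and \<beta>: "\<bar>\<beta>\<bar> < 1 / (of_nat q)\<^sup>2"
    and c: "c \<ge> 1" and k: "k > 0"
    and close: "\<bar>of_int k * (of_nat c * (of_int a / of_nat q + \<beta>)) - of_int b\<bar> < 1 / real (2 * q)"
  shows "real q \<le> 2 * real c * of_int k"
proof -
  define Z where "Z = int q * b - int c * a * k"
  define \<delta> where "\<delta> = of_int k * (of_nat c * (of_int a / of_nat q + \<beta>)) - of_int b"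
  have "of_int Z = of_int k * real c * real q * \<beta> - real q * \<delta>"
    using q by (simp add: Z_def \<delta>_def field_simps)
  then have "\<bar>of_int Z\<bar> \<le> of_int k * real c * real q * \<bar>\<beta>\<bar> + real q * \<bar>\<delta>\<bar>"
    using k by (simp add: abs_mult abs_triangle_ineq4[THEN order_trans])
  moreover have "real q * \<bar>\<delta>\<bar> < 1 / 2"
  proof -
    have "real q * \<bar>\<delta>\<bar> < real q * (1 / real (2 * q))"
      using close q unfolding \<delta>_def by (intro mult_strict_left_mono) simp_all
    then show ?thesis
      using q by simp
  qed
  moreover have "of_int k * real c * real q * \<bar>\<beta>\<bar> < of_int k * real c / real q"
  proof -
    have "of_int k * real c * real q * \<bar>\<beta>\<bar> < of_int k * real c * real q * (1 / (of_nat q)\<^sup>2)"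
      using \<beta> k c q by (intro mult_strict_left_mono) auto
    then show ?thesis
      using q by (simp add: power2_eq_square)
  qed
  ultimately have Z_lt: "\<bar>of_int Z\<bar> < 1 / 2 + of_int k * real c / real q"
    by linarith
  show ?thesis
  proof (cases "Z = 0")
    case True
    then have "int c * k * a = int q * b"
      by (simp add: Z_def algebra_simps)
    then have "int q dvd (int c * k) * a"
      by (rule dvdI)
    then have "int q dvd int c * k"
      using cop by (simp add: coprime_commute coprime_dvd_mult_left_iff)
    then have "int q \<le> int c * k"
      using c k by (intro zdvd_imp_le) auto
    then have "real q \<le> real c * of_int k"
      by (metis of_int_le_iff of_int_mult of_int_of_nat_eq)
    moreover have "0 \<le> real c * of_int k"
      using k by simp
    ultimately show ?thesis
      by linarith
  next
    case False
    then have "1 \<le> \<bar>real_of_int Z\<bar>"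
      by linarith
    then have "1 / 2 < of_int k * real c / real q"
      using Z_lt by linarith
    then show ?thesis
      using q by (simp add: less_divide_eq mult_ac)
  qed
qed

lemma Dirichlet_approx_multiple:
  fixes \<alpha> \<beta> :: real and a :: int and q c :: nat
  assumes q: "q \<ge> 1" and cop: "coprime a (int q)" and \<alpha>: "\<alpha> = of_int a / of_nat q + \<beta>"
    and \<beta>: "\<bar>\<beta>\<bar> < 1 / (of_nat q)\<^sup>2" and c: "c \<ge> 1"
  obtains b r where "r \<ge> 1" "coprime b (int r)"
    "\<bar>of_nat c * \<alpha> - of_int b / of_nat r\<bar> \<le> 1 / (of_nat r)\<^sup>2"
    "real r \<le> 2 * real q" "real q \<le> 2 * real c * real r"
proof -
  obtain b k where bk: "coprime b k" "0 < k" "k \<le> int (2 * q)"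
    "\<bar>of_int k * (of_nat c * \<alpha>) - of_int b\<bar> < 1 / real (2 * q)"
    using Dirichlet_approx_coprime[of "2 * q" "of_nat c * \<alpha>"] q by auto
  define r where "r = nat k"
  have r: "r \<ge> 1" "real r \<le> 2 * real q" "coprime b (int r)" and kr: "real r = of_int k"
    using bk by (simp_all add: r_def)
  have "of_nat c * \<alpha> - of_int b / of_nat r = (of_int k * (of_nat c * \<alpha>) - of_int b) / of_int k"
    using bk(2) by (simp add: kr field_simps)
  then have "\<bar>of_nat c * \<alpha> - of_int b / of_nat r\<bar> = \<bar>of_int k * (of_nat c * \<alpha>) - of_int b\<bar> / real r"
    using bk(2) by (simp add: kr abs_divide)
  also have "\<dots> \<le> (1 / real r) / real r"
  proof (intro divide_right_mono)
    have "1 / real (2 * q) \<le> 1 / real r"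
      using r by (intro divide_left_mono) auto
    then show "\<bar>of_int k * (of_nat c * \<alpha>) - of_int b\<bar> \<le> 1 / real r"
      using bk(4) by linarith
  qed simp
  finally have "\<bar>of_nat c * \<alpha> - of_int b / of_nat r\<bar> \<le> 1 / (of_nat r)\<^sup>2"
    by (simp add: power2_eq_square)
  moreover have "real q \<le> 2 * real c * real r"
    using denominator_lower_bound[of q a \<beta> c k b] q cop \<beta> c bk by (simp add: \<alpha> kr)
  ultimately show thesis
    using r that by blast
qed

lemma weyl_sum_squared_le:
  fixes \<alpha> \<beta> :: real and a :: int and q c N :: nat
  assumes q: "q \<ge> 2" and cop: "coprime a (int q)" and \<alpha>: "\<alpha> = of_int a / of_nat q + \<beta>"
    and \<beta>: "\<bar>\<beta>\<bar> < 1 / (of_nat q)\<^sup>2" and c: "c \<ge> 1"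
  shows "(norm (\<Sum>m\<in>{1..N}. e (of_nat c * \<alpha> * (of_nat m)\<^sup>2)))\<^sup>2
       \<le> 32 * real c * (real N)\<^sup>2 / real q + 26 * real N * ln (real q) + 16 * real q * ln (real q)"
proof -
  define \<theta> where "\<theta> = of_nat (2 * c) * \<alpha>"
  obtain b r where r: "r \<ge> 1" "coprime b (int r)" and approx: "\<bar>\<theta> - of_int b / of_nat r\<bar> \<le> 1 / (of_nat r)\<^sup>2"
    and r_le: "real r \<le> 2 * real q" and q_le: "real q \<le> 2 * real (2 * c) * real r"
    unfolding \<theta>_def by (rule Dirichlet_approx_multiple[where c = "2 * c", OF _ cop \<alpha> \<beta>]) (use q c in auto)
  then have inv_r: "1 / real r \<le> 4 * real c / real q"
    using q by (simp add: field_simps)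
  define f where "f h = norm (\<Sum>n\<in>{1..N-h}. e (\<theta> * of_nat h * of_nat n))" for h
  have f_le: "f h \<le> real N" for h
    using norm_sum_e_le[of "\<lambda>n. \<theta> * of_nat h * of_nat n" "{1..N-h}"] by (simp add: f_def)
  have f_le_dist: "f h \<le> 1 / (2 * dist_int (\<theta> * of_nat h))" if "dist_int (\<theta> * of_nat h) > 0" for h
    unfolding f_def using that by (rule norm_sum_e_linear_le)
  have "(norm (\<Sum>m\<in>{1..N}. e (of_nat c * \<alpha> * (of_nat m)\<^sup>2)))\<^sup>2 \<le> real N + 2 * (\<Sum>h\<in>{1..N}. f h)"
    using weyl_differencing[of "of_nat c * \<alpha>" N] by (simp add: f_def \<theta>_def mult_ac)
  also have "(\<Sum>h\<in>{1..N}. f h) \<le> (real N / real r + 1) * (4 * real N + real r * (1 + ln (real r)))"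
    by (rule sum_blocks_le[OF r approx _ f_le f_le_dist]) (simp add: f_def)
  finally have W: "(norm (\<Sum>m\<in>{1..N}. e (of_nat c * \<alpha> * (of_nat m)\<^sup>2)))\<^sup>2
      \<le> 8 * (real N)\<^sup>2 * (1 / real r) + (real N + real r) * (2 * (1 + ln (real r))) + 9 * real N"
    using r by (simp add: field_simps power2_eq_square)
  have "ln 2 \<le> ln (real q)"
    using q by simp
  then have ln_q: "2 / 3 \<le> ln (real q)"
    using ln2_ge_two_thirds by linarith
  have "ln (real r) \<le> ln (2 * real q)"
    using r r_le by simp
  then have "ln (real r) \<le> ln 2 + ln (real q)"
    using q by (simp add: ln_mult)
  then have ln_r: "1 + ln (real r) \<le> 4 * ln (real q)"
    using ln_q ln_le_minus_one[of 2] by simp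
  have "(real N + real r) * (2 * (1 + ln (real r))) \<le> (real N + 2 * real q) * (8 * ln (real q))"
    by (rule mult_mono) (use r r_le ln_r in auto)
  moreover have "8 * (real N)\<^sup>2 * (1 / real r) \<le> 8 * (real N)\<^sup>2 * (4 * real c / real q)"
    using inv_r by (intro mult_left_mono) auto
  moreover have "9 * real N * 1 \<le> 9 * real N * (2 * ln (real q))"
    using ln_q by (intro mult_left_mono) auto
  ultimately show ?thesis
    using W by (simp add: algebra_simps)
qed

lemma norm_weyl_sum_le:
  fixes \<alpha> \<beta> X :: real and a :: int and q d N :: nat
  assumes q: "q \<ge> 2" and cop: "coprime a (int q)" and \<alpha>: "\<alpha> = of_int a / of_nat q + \<beta>"
    and \<beta>: "\<bar>\<beta>\<bar> < 1 / (of_nat q)\<^sup>2" and d: "d \<ge> 1" and N: "real N * (real d)\<^sup>2 \<le> X"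
  shows "norm (\<Sum>m\<in>{1..N}. e (real d ^ 4 * \<alpha> * (of_nat m)\<^sup>2))
       \<le> 6 * X / sqrt (real q) + 6 * sqrt (X * ln (real q)) / real d + 4 * sqrt (real q * ln (real q))"
    (is "?W \<le> ?A + ?B + ?C")
proof -
  have L: "ln (real q) > 0" and X: "X \<ge> 0"
    using q N by (auto intro: order_trans[rotated])
  have W: "?W\<^sup>2 \<le> 32 * real (d ^ 4) * (real N)\<^sup>2 / real q + 26 * real N * ln (real q)
      + 16 * real q * ln (real q)"
    using weyl_sum_squared_le[OF q cop \<alpha> \<beta>, of "d ^ 4" N] d by simp
  have A: "32 * real (d ^ 4) * (real N)\<^sup>2 / real q \<le> ?A\<^sup>2"
  proof -
    have "real (d ^ 4) * (real N)\<^sup>2 = (real N * (real d)\<^sup>2)\<^sup>2"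
      by (simp add: power2_eq_square power4_eq_xxxx)
    also have "\<dots> \<le> X\<^sup>2"
      using N by (intro power_mono) auto
    finally have "real (d ^ 4) * (real N)\<^sup>2 \<le> X\<^sup>2" .
    moreover have "0 \<le> real (d ^ 4) * (real N)\<^sup>2"
      by simp
    ultimately have "32 * (real (d ^ 4) * (real N)\<^sup>2) \<le> 36 * X\<^sup>2"
      by linarith
    then have "32 * real (d ^ 4) * (real N)\<^sup>2 / real q \<le> 36 * X\<^sup>2 / real q"
      by (simp add: divide_right_mono mult.assoc)
    then show ?thesis
      using q by (simp add: power_divide power_mult_distrib)
  qed
  have B: "26 * real N * ln (real q) \<le> ?B\<^sup>2"
  proof -
    have "real N \<le> X / (real d)\<^sup>2"
      using N d by (simp add: field_simps)
    then show ?thesis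
      using L X d by (simp add: power_divide power_mult_distrib field_simps)
  qed
  have C: "16 * real q * ln (real q) = ?C\<^sup>2"
    using L by (simp add: power_mult_distrib)
  have "?A\<^sup>2 + ?B\<^sup>2 + ?C\<^sup>2 \<le> (?A + ?B + ?C)\<^sup>2"
    using X L by (simp add: power2_sum)
  then have "?W\<^sup>2 \<le> (?A + ?B + ?C)\<^sup>2"
    using W A B C by linarith
  then show ?thesis
    by (rule power2_le_imp_le) (use X L in simp)
qed

section \<open>The Moebius function\<close>

lemma prime_factors_prod_primes:
  fixes T :: "nat set"
  assumes "finite T" "\<And>p. p \<in> T \<Longrightarrow> prime p"
  shows "prime_factors (\<Prod>T) = T"
proof -
  have "prime_factors (\<Prod>T) = \<Union>((prime_factors \<circ> (\<lambda>x. x)) ` T)"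
    using assms prime_factors_prod[OF assms(1), of "\<lambda>x. x"] by (auto dest: prime_gt_0_nat)
  also have "\<dots> = T"
    using assms(2) by (auto simp: prime_prime_factors)
  finally show ?thesis .
qed

lemma squarefree_prod_primes:
  fixes T :: "nat set"
  assumes "finite T" "\<And>p. p \<in> T \<Longrightarrow> prime p"
  shows "squarefree (\<Prod>T)"
  using assms by (intro squarefree_prod_coprime) (auto intro: primes_coprime squarefree_prime)

lemma prod_primes_dvd:
  fixes T :: "nat set" and s :: nat
  assumes s: "s > 0" and T: "T \<subseteq> prime_factors s"
  shows "\<Prod>T dvd s"
proof -
  have fin: "finite T" and primes: "\<And>p. p \<in> T \<Longrightarrow> prime p"
    using T finite_subset by auto
  then have nz: "\<Prod>T \<noteq> 0"
    by (auto dest: prime_gt_0_nat)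
  show ?thesis
  proof (rule multiplicity_le_imp_dvd[OF nz])
    fix p :: nat assume p: "prime p"
    show "multiplicity p (\<Prod>T) \<le> multiplicity p s"
    proof (cases "p \<in> T")
      case True
      then have "multiplicity p s > 0"
        using T by (auto simp: prime_factors_multiplicity)
      moreover have "multiplicity p (\<Prod>T) \<le> 1"
        using squarefree_factorial_semiring''[OF nz] squarefree_prod_primes[OF fin primes] p by blast
      ultimately show ?thesis by linarith
    next
      case False
      then have "p \<notin> prime_factors (\<Prod>T)"
        using prime_factors_prod_primes[OF fin primes] by simp
      then show ?thesis
        using p by (simp add: prime_factors_multiplicity)
    qed
  qed
qed

lemma prod_prime_factors_squarefree:
  fixes d :: nat
  assumes "squarefree d"
  shows "\<Prod>(prime_factors d) = d"
proof -
  have nz: "d \<noteq> 0"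
    using assms by (metis not_squarefree_0)
  have "(\<Prod>p\<in>prime_factors d. p ^ multiplicity p d) = (\<Prod>p\<in>prime_factors d. p)"
    using squarefree_factorial_semiring'[OF nz] assms by (intro prod.cong) auto
  then show ?thesis
    using prod_prime_factors[OF nz] by simp
qed

lemma sum_moebius_mu_divisors:
  fixes s :: nat
  assumes s: "s > 0"
  shows "(\<Sum>d\<in>{d. d dvd s}. moebius_mu d) = (if s = 1 then 1 else 0)"
proof -
  define P where "P = prime_factors s"
  have finP: "finite P" and finT: "\<And>T. T \<in> Pow P \<Longrightarrow> finite T"
    by (auto simp: P_def dest: finite_subset)
  have pf_prod: "\<And>T. T \<in> Pow P \<Longrightarrow> prime_factors (\<Prod>T) = T"
    using finT by (auto intro!: prime_factors_prod_primes simp: P_def)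
  have "(\<Sum>d\<in>{d. d dvd s}. moebius_mu d) = (\<Sum>d\<in>{d. d dvd s \<and> squarefree d}. (-1) ^ card (prime_factors d))"
    using s by (intro sum.mono_neutral_cong_right) (auto simp: moebius_mu_def)
  also have "\<dots> = (\<Sum>T\<in>Pow P. (-1) ^ card (prime_factors (\<Prod>T)))"
  proof (rule sum.reindex_bij_betw[symmetric], rule bij_betw_byWitness[where f' = prime_factors])
    show "\<forall>T\<in>Pow P. prime_factors (\<Prod>T) = T"
      using pf_prod by blast
    show "\<forall>d\<in>{d. d dvd s \<and> squarefree d}. \<Prod>(prime_factors d) = d"
      by (auto intro: prod_prime_factors_squarefree)
    show "(\<lambda>T. \<Prod>T) ` Pow P \<subseteq> {d. d dvd s \<and> squarefree d}"
      using s finT by (auto intro!: prod_primes_dvd squarefree_prod_primes simp: P_def)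
    show "prime_factors ` {d. d dvd s \<and> squarefree d} \<subseteq> Pow P"
      using s by (auto simp: P_def intro: dvd_prime_factors[THEN subsetD])
  qed
  also have "\<dots> = (\<Sum>T\<in>Pow P. (-1) ^ card T)"
    by (intro sum.cong refl) (simp add: pf_prod)
  also have "\<dots> = (\<Prod>p\<in>P. (1::int) - 1)"
    using prod_diff_conv_sum[OF finP, of "\<lambda>_. (1::int)" "\<lambda>_. 1"] by simp
  also have "\<dots> = (if s = 1 then 1 else 0)"
  proof (cases "s = 1")
    case False
    then have "P \<noteq> {}"
      using s by (auto simp: P_def prime_factorization_empty_iff)
    then show ?thesis
      using False finP by auto
  qed (simp add: P_def)
  finally show ?thesis .
qed

lemma squarefree_iff_square_part_eq_1:
  fixes n :: nat
  shows "squarefree n \<longleftrightarrow> square_part n = 1"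
proof
  assume "squarefree n"
  then show "square_part n = 1"
    using squarefreeD square_part_square_dvd by (metis nat_dvd_1_iff_1)
next
  assume "square_part n = 1"
  then show "squarefree n"
    by (intro squarefreeI) (metis dvd_square_part_iff)
qed

lemma moebius_mu_squared:
  fixes n :: nat
  assumes n: "n > 0"
  shows "moebius_mu n ^ 2 = (\<Sum>d\<in>{d. d\<^sup>2 dvd n}. moebius_mu d)"
proof -
  have "(\<Sum>d\<in>{d. d\<^sup>2 dvd n}. moebius_mu d) = (\<Sum>d\<in>{d. d dvd square_part n}. moebius_mu d)"
    by (simp add: dvd_square_part_iff)
  also have "\<dots> = (if squarefree n then 1 else 0)"
  proof -
    have "square_part n > 0"
      using n square_part_0_iff[of n] by linarith
    then show ?thesis
      by (simp add: sum_moebius_mu_divisors squarefree_iff_square_part_eq_1)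
  qed
  also have "\<dots> = moebius_mu n ^ 2"
    using n by (simp add: moebius_mu_def flip: power_mult)
  finally show ?thesis ..
qed

lemma abs_moebius_mu_le: "\<bar>moebius_mu n\<bar> \<le> 1"
  by (simp add: moebius_mu_def power_abs)

section \<open>The squarefree Weyl sum\<close>

lemma sum_multiples_reindex:
  fixes g :: "nat \<Rightarrow> 'a::comm_monoid_add" and k M :: nat
  assumes k: "k > 0"
  shows "(\<Sum>n\<in>{n\<in>{1..M}. k dvd n}. g n) = (\<Sum>m\<in>{1..M div k}. g (k * m))"
  by (rule sum.reindex_bij_witness[where i = "\<lambda>m. k * m" and j = "\<lambda>n. n div k"])
     (use k in \<open>auto simp: less_eq_div_iff_mult_less_eq div_le_mono mult.commute
        elim!: dvdE\<close>)

lemma sum_moebius_mu_squared_eq: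
  fixes f :: "nat \<Rightarrow> 'a::comm_ring_1" and M :: nat
  shows "(\<Sum>n\<in>{1..M}. of_int ((moebius_mu n)\<^sup>2) * f n)
       = (\<Sum>d\<in>{1..M}. of_int (moebius_mu d) * (\<Sum>m\<in>{1..M div d\<^sup>2}. f (d\<^sup>2 * m)))"
proof -
  have square_divisors: "{d. d\<^sup>2 dvd n} = {d\<in>{1..M}. d\<^sup>2 dvd n}" if n: "n \<in> {1..M}" for n
  proof -
    have "1 \<le> d \<and> d \<le> M" if "d\<^sup>2 dvd n" for d
    proof -
      have "d \<noteq> 0"
        using that n by (cases "d = 0") auto
      moreover have "d\<^sup>2 \<le> n"
        using that n by (intro dvd_imp_le) auto
      moreover have "d \<le> d\<^sup>2"
        by (simp add: power2_eq_square)
      ultimately show ?thesis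
        using n by auto
    qed
    then show ?thesis by auto
  qed
  have "(\<Sum>n\<in>{1..M}. of_int ((moebius_mu n)\<^sup>2) * f n)
      = (\<Sum>n\<in>{1..M}. \<Sum>d\<in>{1..M}. if d\<^sup>2 dvd n then of_int (moebius_mu d) * f n else 0)"
  proof (rule sum.cong[OF refl])
    fix n assume n: "n \<in> {1..M}"
    then have "of_int ((moebius_mu n)\<^sup>2) * f n = (\<Sum>d\<in>{d\<in>{1..M}. d\<^sup>2 dvd n}. of_int (moebius_mu d)) * f n"
      by (subst square_divisors[OF n, symmetric]) (simp add: moebius_mu_squared)
    also have "\<dots> = (\<Sum>d\<in>{1..M}. if d\<^sup>2 dvd n then of_int (moebius_mu d) * f n else 0)"
      unfolding sum_distrib_right by (rule sum.inter_filter) simp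
    finally show "of_int ((moebius_mu n)\<^sup>2) * f n
        = (\<Sum>d\<in>{1..M}. if d\<^sup>2 dvd n then of_int (moebius_mu d) * f n else 0)" .
  qed
  also have "\<dots> = (\<Sum>d\<in>{1..M}. \<Sum>n\<in>{1..M}. if d\<^sup>2 dvd n then of_int (moebius_mu d) * f n else 0)"
    by (rule sum.swap)
  also have "\<dots> = (\<Sum>d\<in>{1..M}. of_int (moebius_mu d) * (\<Sum>m\<in>{1..M div d\<^sup>2}. f (d\<^sup>2 * m)))"
  proof (rule sum.cong[OF refl])
    fix d :: nat assume d: "d \<in> {1..M}"
    have "(\<Sum>n\<in>{1..M}. if d\<^sup>2 dvd n then of_int (moebius_mu d) * f n else 0)
        = (\<Sum>n\<in>{n\<in>{1..M}. d\<^sup>2 dvd n}. of_int (moebius_mu d) * f n)"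
      by (rule sum.inter_filter[symmetric]) simp
    also have "\<dots> = (\<Sum>m\<in>{1..M div d\<^sup>2}. of_int (moebius_mu d) * f (d\<^sup>2 * m))"
      using d by (intro sum_multiples_reindex) simp
    finally show "(\<Sum>n\<in>{1..M}. if d\<^sup>2 dvd n then of_int (moebius_mu d) * f n else 0)
        = of_int (moebius_mu d) * (\<Sum>m\<in>{1..M div d\<^sup>2}. f (d\<^sup>2 * m))"
      by (simp add: sum_distrib_left)
  qed
  finally show ?thesis .
qed

lemma sum_inverse_squares_tail_le:
  fixes D M :: nat
  assumes "D \<ge> 1"
  shows "(\<Sum>d\<in>{D<..M}. 1 / (real d)\<^sup>2) \<le> 1 / real D"
proof -
  have tail: "(\<Sum>d\<in>{D<..M}. 1 / (real d)\<^sup>2) \<le> 1 / real D - 1 / real M" if "D \<le> M" for M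
    using that
  proof (induction M rule: dec_induct)
    case (step n)
    have n: "real n > 0"
      using step.hyps assms by simp
    have "1 / (real (Suc n))\<^sup>2 \<le> 1 / (real n * real (Suc n))"
      using n by (intro divide_left_mono) (auto simp: power2_eq_square)
    also have "\<dots> = 1 / real n - 1 / real (Suc n)"
      using n by (simp add: field_simps)
    finally have "1 / (real (Suc n))\<^sup>2 \<le> 1 / real n - 1 / real (Suc n)" .
    moreover have "{D<..Suc n} = insert (Suc n) {D<..n}"
      using step.hyps by auto
    ultimately show ?case
      using step.IH by simp
  qed simp
  show ?thesis
  proof (cases "D \<le> M")
    case True
    have "0 \<le> 1 / real M"
      by simp
    then show ?thesis
      using tail[OF True] by linarith
  qed simp
qed

lemma norm_squarefree_weyl_sum_le_trivial:
  fixes \<alpha> X :: real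
  assumes "X \<ge> 0"
  shows "norm (\<Sum>n\<in>{1..nat \<lfloor>X\<rfloor>}. of_int ((moebius_mu n)\<^sup>2) * e (\<alpha> * (of_nat n)\<^sup>2)) \<le> X"
proof -
  have "norm (\<Sum>n\<in>{1..nat \<lfloor>X\<rfloor>}. of_int ((moebius_mu n)\<^sup>2) * e (\<alpha> * (of_nat n)\<^sup>2))
      \<le> (\<Sum>n\<in>{1..nat \<lfloor>X\<rfloor>}. norm (of_int ((moebius_mu n)\<^sup>2) * e (\<alpha> * (of_nat n)\<^sup>2)))"
    by (rule norm_sum)
  also have "\<dots> \<le> (\<Sum>n\<in>{1..nat \<lfloor>X\<rfloor>}. 1)"
  proof (rule sum_mono)
    fix n
    have "(moebius_mu n)\<^sup>2 \<le> 1"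
      using abs_moebius_mu_le[of n] by (simp add: abs_square_le_1)
    then show "norm (of_int ((moebius_mu n)\<^sup>2) * e (\<alpha> * (of_nat n)\<^sup>2) :: complex) \<le> 1"
      by (simp add: norm_mult power_abs del: of_int_power)
  qed
  also have "\<dots> \<le> X"
    using assms by simp
  finally show ?thesis .
qed

lemma sum_cutoff_profile_le:
  fixes K B X :: real and D M :: nat
  assumes "D \<ge> 1" "K \<ge> 0" "X \<ge> 0"
  shows "(\<Sum>d\<in>{1..M}. (if d \<le> D then K else 0) + B / real d + (if D < d then X / (real d)\<^sup>2 else 0))
       \<le> real D * K + B * harm M + X / real D"
proof -
  have "(\<Sum>d\<in>{1..M}. if d \<le> D then K else 0) = real (card {d\<in>{1..M}. d \<le> D}) * K"
    by (simp add: sum.inter_filter[symmetric])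
  also have "\<dots> \<le> real D * K"
  proof -
    have "card {d\<in>{1..M}. d \<le> D} \<le> card {1..D}"
      by (intro card_mono) auto
    then show ?thesis
      using assms by (intro mult_right_mono) auto
  qed
  finally have small: "(\<Sum>d\<in>{1..M}. if d \<le> D then K else 0) \<le> real D * K" .
  have "(\<Sum>d\<in>{1..M}. if D < d then X / (real d)\<^sup>2 else 0) = X * (\<Sum>d\<in>{D<..M}. 1 / (real d)\<^sup>2)"
    using assms by (simp add: sum.inter_filter[symmetric] sum_distrib_left)
      (intro sum.cong, auto)
  also have "\<dots> \<le> X / real D"
    using sum_inverse_squares_tail_le[OF assms(1), of M] assms(3)
    by (simp add: mult_left_mono divide_inverse flip: inverse_eq_divide)
  finally have large: "(\<Sum>d\<in>{1..M}. if D < d then X / (real d)\<^sup>2 else 0) \<le> X / real D" .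
  have "(\<Sum>d\<in>{1..M}. B / real d) = B * harm M"
    by (simp add: harm_def sum_distrib_left divide_inverse)
  with small large show ?thesis
    by (simp add: sum.distrib)
qed

lemma norm_squarefree_weyl_sum_le_cutoff:
  fixes \<alpha> \<beta> X :: real and a :: int and q D :: nat
  assumes q: "q \<ge> 2" and cop: "coprime a (int q)" and \<alpha>: "\<alpha> = of_int a / of_nat q + \<beta>"
    and \<beta>: "\<bar>\<beta>\<bar> < 1 / (of_nat q)\<^sup>2" and X: "X \<ge> 2" and D: "D \<ge> 1"
  shows "norm (\<Sum>n\<in>{1..nat \<lfloor>X\<rfloor>}. of_int ((moebius_mu n)\<^sup>2) * e (\<alpha> * (of_nat n)\<^sup>2))
       \<le> X / real D + real D * (6 * X / sqrt (real q) + 4 * sqrt (real q * ln (real q)))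
         + 18 * sqrt (X * ln (real q)) * ln X"
proof -
  define M where "M = nat \<lfloor>X\<rfloor>"
  define K where "K = 6 * X / sqrt (real q) + 4 * sqrt (real q * ln (real q))"
  define B where "B = 6 * sqrt (X * ln (real q))"
  define T where "T d = (\<Sum>m\<in>{1..M div d\<^sup>2}. e (real d ^ 4 * \<alpha> * (of_nat m)\<^sup>2))" for d
  have M: "real M \<le> X" "M \<ge> 2"
    using X by (simp_all add: M_def le_nat_floor)
  have sum_eq: "(\<Sum>n\<in>{1..M}. of_int ((moebius_mu n)\<^sup>2) * e (\<alpha> * (of_nat n)\<^sup>2))
      = (\<Sum>d\<in>{1..M}. of_int (moebius_mu d) * T d)"
    unfolding sum_moebius_mu_squared_eq T_def
    by (intro sum.cong refl arg_cong2[where f = "(*)"]) (simp add: power_mult_distrib mult_ac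
        flip: power_mult)
  have T_le: "norm (T d) \<le> (if d \<le> D then K else 0) + B / real d
      + (if D < d then X / (real d)\<^sup>2 else 0)" if d: "d \<in> {1..M}" for d
  proof -
    have "M div d\<^sup>2 * d\<^sup>2 \<le> M"
      by (rule div_times_less_eq_dividend)
    then have "real (M div d\<^sup>2) * (real d)\<^sup>2 \<le> real M"
      by (metis of_nat_le_iff of_nat_mult of_nat_power)
    then have N: "real (M div d\<^sup>2) * (real d)\<^sup>2 \<le> X"
      using M(1) by linarith
    have "norm (T d) \<le> K + B / real d"
      using norm_weyl_sum_le[OF q cop \<alpha> \<beta> _ N] d by (simp add: T_def K_def B_def)
    moreover have "norm (T d) \<le> X / (real d)\<^sup>2"
    proof -
      have "norm (T d) * (real d)\<^sup>2 \<le> real (M div d\<^sup>2) * (real d)\<^sup>2"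
        using norm_sum_e_le[of "\<lambda>m. real d ^ 4 * \<alpha> * (of_nat m)\<^sup>2" "{1..M div d\<^sup>2}"]
        by (intro mult_right_mono) (simp_all add: T_def)
      then have "norm (T d) * (real d)\<^sup>2 \<le> X"
        using N by linarith
      then show ?thesis
        using d by (simp add: le_divide_eq)
    qed
    moreover have "0 \<le> B / real d"
      using X q by (simp add: B_def)
    ultimately show ?thesis
      by auto
  qed
  have "norm (\<Sum>d\<in>{1..M}. of_int (moebius_mu d) * T d) \<le> (\<Sum>d\<in>{1..M}. norm (T d))"
    using abs_moebius_mu_le
    by (intro norm_sum[THEN order_trans] sum_mono)
       (simp add: norm_mult mult_left_le_one_le flip: of_int_abs)
  also have "\<dots> \<le> real D * K + B * harm M + X / real D"
    by (rule order_trans[OF sum_mono sum_cutoff_profile_le]) (use T_le X q D in \<open>auto simp: K_def\<close>)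
  also have "B * harm M \<le> B * (3 * ln X)"
  proof -
    have "ln (real M) \<le> ln X" "ln 2 \<le> ln X"
      using M X by simp_all
    then have "harm M \<le> 3 * ln X"
      using harm_le_1_plus_ln[of M] ln2_ge_two_thirds by linarith
    then show ?thesis
      using X q by (intro mult_left_mono) (auto simp: B_def)
  qed
  finally show ?thesis
    unfolding M_def[symmetric] sum_eq by (simp add: K_def B_def algebra_simps)
qed

lemma bound_by_optimal_cutoff:
  fixes A B S :: real
  assumes A: "0 \<le> A" and B: "0 < B" and S_le: "S \<le> A"
    and cutoff: "\<And>D::nat. D \<ge> 1 \<Longrightarrow> S \<le> A / real D + B * real D"
  shows "S \<le> 3 * sqrt (A * B)"
proof (cases "A \<le> B")
  case True
  then have "sqrt (A * A) \<le> sqrt (A * B)"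
    using A by (intro real_sqrt_le_mono mult_left_mono)
  then show ?thesis
    using S_le A by (simp add: real_sqrt_mult)
next
  case False
  define a b where "a = sqrt A" and "b = sqrt B"
  have ab: "A = a\<^sup>2" "B = b\<^sup>2" "b > 0" "a > b" "sqrt (A * B) = a * b"
    using A B False by (auto simp: a_def b_def real_sqrt_mult)
  define D where "D = nat \<lfloor>a / b\<rfloor>"
  have "1 \<le> \<lfloor>a / b\<rfloor>"
    using ab by (simp add: le_floor_iff)
  then have D_eq: "real D = of_int \<lfloor>a / b\<rfloor>" and D: "1 \<le> D"
    unfolding D_def by linarith+
  have "real D \<le> a / b" "a / b \<le> 2 * real D"
    using D D_eq by linarith+
  have "A / real D \<le> A / (a / b / 2)"
    using \<open>a / b \<le> 2 * real D\<close> ab D by (intro divide_left_mono) auto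
  moreover have "B * real D \<le> B * (a / b)"
    using \<open>real D \<le> a / b\<close> ab by (intro mult_left_mono) auto
  ultimately have "S \<le> A / (a / b / 2) + B * (a / b)"
    using cutoff[OF D] by linarith
  also have "\<dots> = 3 * sqrt (A * B)"
    using ab by (simp add: power2_eq_square field_simps)
  finally show ?thesis .
qed

lemma powr_quarter_eq_sqrt_sqrt:
  fixes x :: real
  assumes "x \<ge> 0"
  shows "x powr (1/4) = sqrt (sqrt x)"
proof (cases "x = 0")
  case False
  then have "sqrt (sqrt x) = (x powr (1/2)) powr (1/2)"
    using assms by (simp add: powr_half_sqrt)
  then show ?thesis
    by (simp add: powr_powr)
qed simp

lemma norm_squarefree_weyl_sum_le:
  fixes \<alpha> \<beta> X :: real and a :: int and q :: nat
  assumes q: "q \<ge> 2" and cop: "coprime a (int q)" and \<alpha>: "\<alpha> = of_int a / of_nat q + \<beta>"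
    and \<beta>: "\<bar>\<beta>\<bar> < 1 / (of_nat q)\<^sup>2" and X: "X \<ge> 2"
  shows "norm (\<Sum>n\<in>{1..nat \<lfloor>X\<rfloor>}. of_int ((moebius_mu n)\<^sup>2) * e (\<alpha> * (of_nat n)\<^sup>2))
       \<le> 18 * (X / real q powr (1/4) + sqrt X * ln X * sqrt (ln (real q))
         + sqrt X * real q powr (1/4) * ln (real q) powr (1/4))"
proof -
  define S where "S = norm (\<Sum>n\<in>{1..nat \<lfloor>X\<rfloor>}. of_int ((moebius_mu n)\<^sup>2) * e (\<alpha> * (of_nat n)\<^sup>2))"
  define L where "L = ln (real q)"
  define K where "K = 6 * X / sqrt (real q) + 4 * sqrt (real q * L)"
  define R where "R = 18 * sqrt (X * L) * ln X"
  have L: "L > 0" and R: "R \<ge> 0"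
    using q X by (simp_all add: L_def R_def)
  have "S - R \<le> 3 * sqrt (X * K)"
  proof (rule bound_by_optimal_cutoff)
    show "S - R \<le> X"
      using norm_squarefree_weyl_sum_le_trivial[of X \<alpha>] X R by (simp add: S_def)
    show "S - R \<le> X / real D + K * real D" if "D \<ge> 1" for D
      using norm_squarefree_weyl_sum_le_cutoff[OF q cop \<alpha> \<beta> X that]
      by (simp add: S_def K_def R_def L_def algebra_simps)
    show "0 < K"
      using X q L unfolding K_def by (intro add_pos_nonneg) auto
  qed (use X in simp)
  also have "sqrt (X * K) \<le> sqrt 6 * X / sqrt (sqrt (real q)) + 2 * sqrt X * sqrt (sqrt (real q * L))"
  proof -
    have XK: "X * K = (sqrt 6 * X / sqrt (sqrt (real q)))\<^sup>2 + (2 * sqrt X * sqrt (sqrt (real q * L)))\<^sup>2"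
      using X q L by (simp add: K_def power_mult_distrib power_divide power2_eq_square field_simps)
    have "sqrt (X * K)
        \<le> \<bar>sqrt 6 * X / sqrt (sqrt (real q))\<bar> + \<bar>2 * sqrt X * sqrt (sqrt (real q * L))\<bar>"
      unfolding XK by (rule sqrt_sum_squares_le_sum_abs)
    then show ?thesis
      using X q L by (simp add: abs_mult)
  qed
  finally have "S \<le> 3 * sqrt 6 * (X / sqrt (sqrt (real q)))
      + 6 * (sqrt X * sqrt (sqrt (real q)) * sqrt (sqrt L)) + 18 * (sqrt X * ln X * sqrt L)"
    by (simp add: R_def real_sqrt_mult algebra_simps)
  moreover have "3 * sqrt 6 * (X / sqrt (sqrt (real q))) \<le> 18 * (X / sqrt (sqrt (real q)))"
    using real_sqrt_le_mono[of 6 36] X by (intro mult_right_mono) auto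
  moreover have "0 \<le> sqrt X * sqrt (sqrt (real q)) * sqrt (sqrt L)"
    using X L by simp
  ultimately have "S \<le> 18 * (X / sqrt (sqrt (real q))) + 18 * (sqrt X * ln X * sqrt L)
      + 18 * (sqrt X * sqrt (sqrt (real q)) * sqrt (sqrt L))"
    by linarith
  then show ?thesis
    using L by (simp add: S_def L_def powr_quarter_eq_sqrt_sqrt distrib_left)
qed

theorem theorem1p11:
  shows "\<exists>C>0. \<forall>(a::int) (q::nat) (\<beta>::real) (\<alpha>::real) (X::real).
     q \<ge> 1 \<and> coprime a (int q) \<and> \<alpha> = of_int a / of_nat q + \<beta> \<and>
     \<bar>\<beta>\<bar> < 1 / (of_nat q)^2 \<and> X \<ge> 2 \<longrightarrow>
     norm (\<Sum>n\<in>{1..nat \<lfloor>X\<rfloor>}. of_int ((moebius_mu n)^2) * e (\<alpha> * (of_nat n)^2))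
       \<le> C * (X / (of_nat q) powr (1/4)
              + sqrt X * ln X * sqrt (ln (of_nat q))
              + sqrt X * (of_nat q) powr (1/4) * (ln (of_nat q)) powr (1/4))"
proof (intro exI[of _ 18] conjI allI impI)
  fix a :: int and q :: nat and \<beta> \<alpha> X :: real
  assume "q \<ge> 1 \<and> coprime a (int q) \<and> \<alpha> = of_int a / of_nat q + \<beta> \<and>
     \<bar>\<beta>\<bar> < 1 / (of_nat q)^2 \<and> X \<ge> 2"
  then have q: "q \<ge> 1" and cop: "coprime a (int q)" and \<alpha>: "\<alpha> = of_int a / of_nat q + \<beta>"
    and \<beta>: "\<bar>\<beta>\<bar> < 1 / (of_nat q)\<^sup>2" and X: "X \<ge> 2"
    by auto
  show "norm (\<Sum>n\<in>{1..nat \<lfloor>X\<rfloor>}. of_int ((moebius_mu n)^2) * e (\<alpha> * (of_nat n)^2))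
       \<le> 18 * (X / (of_nat q) powr (1/4)
              + sqrt X * ln X * sqrt (ln (of_nat q))
              + sqrt X * (of_nat q) powr (1/4) * (ln (of_nat q)) powr (1/4))"
  proof (cases "q = 1")
    case True
    \<comment> \<open>all logarithmic terms vanish, and the trivial bound suffices\<close>
    then show ?thesis
      using norm_squarefree_weyl_sum_le_trivial[of X \<alpha>] X by simp
  next
    case False
    with q have "q \<ge> 2"
      by simp
    then show ?thesis
      using norm_squarefree_weyl_sum_le[OF _ cop \<alpha> \<beta> X] by simp
  qed
qed (simp)

end
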